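(* Let $L$ be a homogeneous Lévy basis on $\mathbb{R}^k$ whose associated infinitely divisible law $\mu$ (with triplet $(\gamma,b,\nu)$) is not $\delta_0$. Let $T$ and $\tilde T$ be non-negative Lévy bases on $\mathbb{R}^k$ with continuous control measures, each independent of $L$, and let $L_T$, $L_{\tilde T}$ be the corresponding subordinated Lévy bases. If $L_T\overset{d}{=}L_{\tilde T}$ (equality of finite-dimensional laws as random fields indexed by bounded Borel sets), then $T\overset{d}{=}\tilde T$.
   Context: A Lévy basis on $\mathbb{R}^k$ is a family $\{L(A):A\in\mathcal{B}_b(\mathbb{R}^k)\}$ (bounded Borel sets) of random variables which is independently scattered (values on disjoint sets are independent, and $L(\cup_n A_n)=\sum_n L(A_n)$ a.s. for disjoint $A_n$ with bounded union) and such that each $L(A)$ is infinitely divisible. It has a characteristic quadruplet $(\gamma(s),b(s),\nu(s,\cdot),c)$ with $\log\mathbb{E}e^{izL(A)}=\int_A\psi(z,s)c(ds)$, $\psi(z,s)=iz\gamma(s)-\frac12b(s)z^2+\int(e^{izx}-1-izx\mathbf 1_{\{|x|\le1\}})\nu(s,dx)$; $c$ is the control measure. $L$ is homogeneous with triplet $(\gamma,b,\nu)$ if these do not depend on $s$ and $c$ is Lebesgue measure, in which case $L(A)\sim\mu^{\mathrm{Leb}(A)}$ where $\mu$ is the ID law of $(\gamma,b,\nu)$ and $\mu^t$ has characteristic function $\hat\mu^{\,t}$. A non-negative Lévy basis $T$ (with continuous control measure) is one for which almost surely $T(\omega,\cdot)$ is a measure; it can be extended to all Borel sets. Subordination: for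 almost every $\omega$, $T(\omega,\cdot)$ is a measure finite on bounded sets and (assumed) vanishing on $\{x:x_i=0\text{ for some }i\}$, so there is a measurable $\phi_\omega:\mathbb{R}^k\to\mathbb{R}^k$ with $T(\omega,A)=\mathrm{Leb}(\phi_\omega^{-1}(A))$; with the meta-time $\varphi(\omega,A)=\phi_\omega^{-1}(A)$, define $L_T(\omega,A)=L(\omega,\varphi(\omega,A))$ for $A\in\mathcal{B}_b(\mathbb{R}^k)$. Then $L_T$ is a Lévy basis with $\mathcal{L}(L_T(A)\mid T)=\mu^{T(A)}$. *)

theory Defs
  imports "HOL-Probability.Probability"
begin

text \<open>Bounded Borel subsets of R^k (points are real^'n, with 'n a finite index type of size k).\<close>
definition bborel :: "(real^'n) set set" where
  "bborel = {A. A \<in> sets borel \<and> bounded A}"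

fun conv_pow :: "real measure \<Rightarrow> nat \<Rightarrow> real measure" where
  "conv_pow \<rho> 0 = return borel 0"
| "conv_pow \<rho> (Suc n) = convolution \<rho> (conv_pow \<rho> n)"

definition infinitely_divisible :: "real measure \<Rightarrow> bool" where
  "infinitely_divisible \<mu> \<longleftrightarrow> prob_space \<mu> \<and> sets \<mu> = sets borel \<and>
     (\<forall>n>0. \<exists>\<rho>. prob_space \<rho> \<and> sets \<rho> = sets borel \<and> conv_pow \<rho> n = \<mu>)"

definition levy_measure :: "real measure \<Rightarrow> bool" where
  "levy_measure \<nu> \<longleftrightarrow> sets \<nu> = sets borel \<and> emeasure \<nu> {0} = 0 \<and>
     (\<integral>\<^sup>+ x. ennreal (min 1 (x\<^sup>2)) \<partial>\<nu>) < \<infinity>"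

definition levy_exponent :: "real \<Rightarrow> real \<Rightarrow> real measure \<Rightarrow> real \<Rightarrow> complex" where
  "levy_exponent \<gamma> b \<nu> z =
     \<i> * complex_of_real (z * \<gamma>) - complex_of_real (b * z\<^sup>2 / 2)
     + (CLINT x|\<nu>. iexp (z * x) - 1 - \<i> * complex_of_real (z * x) * indicator {-1..1} x)"

definition id_law_of_triplet :: "real measure \<Rightarrow> real \<Rightarrow> real \<Rightarrow> real measure \<Rightarrow> bool" where
  "id_law_of_triplet \<mu> \<gamma> b \<nu> \<longleftrightarrow> prob_space \<mu> \<and> sets \<mu> = sets borel \<and>
     (\<forall>z. char \<mu> z = exp (levy_exponent \<gamma> b \<nu> z))"

definition independently_scattered :: "'w measure \<Rightarrow> ('w \<Rightarrow> (real^'n) set \<Rightarrow> real) \<Rightarrow> bool" where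
  "independently_scattered M X \<longleftrightarrow>
     (\<forall>(A :: nat \<Rightarrow> (real^'n) set) n. (\<forall>i<n. A i \<in> bborel) \<longrightarrow> disjoint_family_on A {..<n} \<longrightarrow>
        prob_space.indep_vars M (\<lambda>_. borel) (\<lambda>i \<omega>. X \<omega> (A i)) {..<n}) \<and>
     (\<forall>A :: nat \<Rightarrow> (real^'n) set. range A \<subseteq> bborel \<longrightarrow> disjoint_family A \<longrightarrow> bounded (\<Union>n. A n) \<longrightarrow>
        (AE \<omega> in M. (\<lambda>n. X \<omega> (A n)) sums X \<omega> (\<Union>n. A n)))"

definition levy_basis :: "'w measure \<Rightarrow> ('w \<Rightarrow> (real^'n) set \<Rightarrow> real) \<Rightarrow> bool" where
  "levy_basis M X \<longleftrightarrow> prob_space M \<and>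
     (\<forall>A\<in>bborel. (\<lambda>\<omega>. X \<omega> A) \<in> borel_measurable M) \<and>
     independently_scattered M X \<and>
     (\<forall>A\<in>bborel. infinitely_divisible (distr M borel (\<lambda>\<omega>. X \<omega> A)))"

definition has_quadruplet ::
  "'w measure \<Rightarrow> ('w \<Rightarrow> (real^'n) set \<Rightarrow> real) \<Rightarrow> (real^'n \<Rightarrow> real) \<Rightarrow> (real^'n \<Rightarrow> real)
    \<Rightarrow> (real^'n \<Rightarrow> real measure) \<Rightarrow> (real^'n) measure \<Rightarrow> bool" where
  "has_quadruplet M X \<gamma> b \<nu> c \<longleftrightarrow>
     sets c = sets borel \<and> (\<forall>A\<in>bborel. emeasure c A < \<infinity>) \<and>
     \<gamma> \<in> borel_measurable borel \<and> b \<in> borel_measurable borel \<and> (\<forall>s. b s \<ge> 0) \<and>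
     (\<forall>s. levy_measure (\<nu> s)) \<and> (\<forall>B\<in>sets borel. (\<lambda>s. emeasure (\<nu> s) B) \<in> borel_measurable borel) \<and>
     (\<forall>A\<in>bborel. \<forall>z.
        set_integrable c A (\<lambda>s. levy_exponent (\<gamma> s) (b s) (\<nu> s) z) \<and>
        char (distr M borel (\<lambda>\<omega>. X \<omega> A)) z
          = exp (set_lebesgue_integral c A (\<lambda>s. levy_exponent (\<gamma> s) (b s) (\<nu> s) z)))"

definition continuous_control_measure :: "'w measure \<Rightarrow> ('w \<Rightarrow> (real^'n) set \<Rightarrow> real) \<Rightarrow> bool" where
  "continuous_control_measure M X \<longleftrightarrow>
     (\<exists>\<gamma> b \<nu> c. has_quadruplet M X \<gamma> b \<nu> c \<and> (\<forall>x. emeasure c {x} = 0))"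

definition nonneg_levy_basis :: "'w measure \<Rightarrow> ('w \<Rightarrow> (real^'n) set \<Rightarrow> real) \<Rightarrow> bool" where
  "nonneg_levy_basis M T \<longleftrightarrow> levy_basis M T \<and>
     (AE \<omega> in M. (\<forall>A\<in>bborel. T \<omega> A \<ge> 0) \<and>
        (\<forall>A :: nat \<Rightarrow> (real^'n) set. range A \<subseteq> bborel \<longrightarrow> disjoint_family A \<longrightarrow> bounded (\<Union>n. A n) \<longrightarrow>
           (\<lambda>n. T \<omega> (A n)) sums T \<omega> (\<Union>n. A n)))"

text \<open>Homogeneous Levy basis with triplet (gamma, b, nu): L(A) ~ mu^{Leb(A)}.\<close>
definition homogeneous_levy_basis ::
  "'w measure \<Rightarrow> ('w \<Rightarrow> (real^'n) set \<Rightarrow> real) \<Rightarrow> real \<Rightarrow> real \<Rightarrow> real measure \<Rightarrow> bool" where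
  "homogeneous_levy_basis M L \<gamma> b \<nu> \<longleftrightarrow> levy_basis M L \<and> b \<ge> 0 \<and> levy_measure \<nu> \<and>
     (\<forall>A\<in>bborel. \<forall>z. char (distr M borel (\<lambda>\<omega>. L \<omega> A)) z
        = exp (complex_of_real (measure lborel A) * levy_exponent \<gamma> b \<nu> z))"

definition field_sigma :: "'w measure \<Rightarrow> ('w \<Rightarrow> (real^'n) set \<Rightarrow> real) \<Rightarrow> 'w set set" where
  "field_sigma M X = sigma_sets (space M)
     (\<Union>A\<in>bborel. {(\<lambda>\<omega>. X \<omega> A) -` B \<inter> space M | B. B \<in> sets borel})"

definition indep_fields :: "'w measure \<Rightarrow> ('w \<Rightarrow> (real^'n) set \<Rightarrow> real) \<Rightarrow> ('w \<Rightarrow> (real^'n) set \<Rightarrow> real) \<Rightarrow> bool" where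
  "indep_fields M X Y \<longleftrightarrow> prob_space.indep_set M (field_sigma M X) (field_sigma M Y)"

text \<open>L_T is the Levy basis L (exponent psi of its triplet) subordinated by the meta-time given by T:
  L_T is a Levy basis and, conditionally on T, its values on disjoint bounded Borel sets A_1..A_n are
  independent with laws mu^{T(A_j)}, expressed through conditional characteristic functions.
  It also records the standing assumption that T vanishes a.s. on the coordinate hyperplanes.\<close>
definition subordinated ::
  "'w measure \<Rightarrow> real \<Rightarrow> real \<Rightarrow> real measure \<Rightarrow> ('w \<Rightarrow> (real^'n) set \<Rightarrow> real)
     \<Rightarrow> ('w \<Rightarrow> (real^'n) set \<Rightarrow> real) \<Rightarrow> bool" where
  "subordinated M \<gamma> b \<nu> T LS \<longleftrightarrow> levy_basis M LS \<and>
     (AE \<omega> in M. \<forall>A\<in>bborel. A \<subseteq> {x. \<exists>i. x $ i = 0} \<longrightarrow> T \<omega> A = 0) \<and>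
     (\<forall>n (A :: nat \<Rightarrow> (real^'n) set) (z :: nat \<Rightarrow> real) E.
        (\<forall>i<n. A i \<in> bborel) \<longrightarrow> disjoint_family_on A {..<n} \<longrightarrow> E \<in> field_sigma M T \<longrightarrow>
        (CLINT \<omega>|M. indicator E \<omega> * exp (\<i> * complex_of_real (\<Sum>i<n. z i * LS \<omega> (A i))))
        = (CLINT \<omega>|M. indicator E \<omega> *
             exp (\<Sum>i<n. complex_of_real (T \<omega> (A i)) * levy_exponent \<gamma> b \<nu> (z i))))"

definition fdd_eq :: "'w measure \<Rightarrow> ('w \<Rightarrow> (real^'n) set \<Rightarrow> real) \<Rightarrow> ('w \<Rightarrow> (real^'n) set \<Rightarrow> real) \<Rightarrow> bool" where
  "fdd_eq M X Y \<longleftrightarrow>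
     (\<forall>n (A :: nat \<Rightarrow> (real^'n) set). (\<forall>i<n. A i \<in> bborel) \<longrightarrow>
        distr M (PiM {..<n} (\<lambda>_. borel)) (\<lambda>\<omega>. \<lambda>i\<in>{..<n}. X \<omega> (A i))
        = distr M (PiM {..<n} (\<lambda>_. borel)) (\<lambda>\<omega>. \<lambda>i\<in>{..<n}. Y \<omega> (A i)))"

end

(*
  Conditionally on T, L_T(A) has law mu^{T(A)}, so E exp (i z L_T(A)) = E exp (psi(z) T(A)) with psi the
  Levy exponent of mu: the characteristic function of L_T(A) is the Laplace transform of the law of
  T(A) >= 0 along the curve psi(R) in the closed left half-plane. This transform is holomorphic in the
  open half-plane and has the characteristic function as boundary value. If Re psi < 0 somewhere, the
  connected set psi(R) accumulates in the open half-plane and analytic continuation determines the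
  transform; otherwise psi(z) = i gamma z with gamma <> 0, since mu <> delta_0, and the transform along
  psi is the characteristic function itself. Hence T(A) and T'(A) have the same law for every A.
  Finally, T(A_1), ..., T(A_n) are a.s. sums of the values of T on the cells of the partition generated
  by A_1, ..., A_n, and these values are independent, so the joint law is determined by one-dimensional
  laws.
*)
theory Submission
  imports Defs "HOL-Complex_Analysis.Conformal_Mappings" "HOL-Library.Nat_Bijection"
begin

section \<open>Laplace transforms of distributions on the half-line\<close>

lemma tendsto_integral_at_within:
  fixes g :: "'c::metric_space \<Rightarrow> 'a \<Rightarrow> 'b::{banach,second_countable_topology}"
  assumes meas: "\<And>y. y \<in> S \<Longrightarrow> g y \<in> borel_measurable M" "G \<in> borel_measurable M"
    and w: "integrable M w"
    and bound: "\<And>y. y \<in> S \<Longrightarrow> AE x in M. norm (g y x) \<le> w x"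
    and lim: "AE x in M. ((\<lambda>y. g y x) \<longlongrightarrow> G x) (at p within S)"
  shows "((\<lambda>y. integral\<^sup>L M (g y)) \<longlongrightarrow> integral\<^sup>L M G) (at p within S)"
proof (subst tendsto_at_iff_sequentially, intro allI impI)
  fix X assume X: "\<forall>i. X i \<in> S - {p}" "X \<longlonglongrightarrow> p"
  show "((\<lambda>y. integral\<^sup>L M (g y)) \<circ> X) \<longlonglongrightarrow> integral\<^sup>L M G"
    unfolding comp_def
  proof (rule integral_dominated_convergence[where w=w])
    show "AE x in M. (\<lambda>i. g (X i) x) \<longlonglongrightarrow> G x"
      using lim
    proof eventually_elim
      case (elim x)
      then show ?case using X unfolding tendsto_at_iff_sequentially comp_def by blast
    qed
  qed (use meas w bound X in auto)
qed

(* Sign convention e^{wx}, so that char P t is the value at w = i t. *)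
definition laplace_transform :: "real measure \<Rightarrow> complex \<Rightarrow> complex" where
  "laplace_transform P w = (CLINT x|P. exp (w * of_real x))"

lemma integrable_exp_mult_nonneg:
  assumes "real_distribution P" "AE x in P. 0 \<le> x" "Re w \<le> 0"
  shows "integrable P (\<lambda>x. exp (w * of_real x))"
proof -
  interpret real_distribution P by fact
  show ?thesis
  proof (rule integrable_const_bound[where B=1])
    show "AE x in P. norm (exp (w * of_real x)) \<le> 1"
      using assms(2) by eventually_elim (use assms(3) in \<open>auto simp: norm_exp_eq_Re mult_nonpos_nonneg\<close>)
  qed (simp add: measurable_cong_sets[OF events_eq_borel refl])
qed

lemma norm_exp_mult_diff_quotient_le:
  fixes h w :: complex and d x :: real
  assumes "d > 0" "x \<ge> 0" "Re h \<le> - d" "Re w \<le> - d"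
  shows "norm ((exp (h * of_real x) - exp (w * of_real x)) / (h - w)) \<le> 1 / d"
proof (cases "h = w")
  case True
  thus ?thesis using assms(1) by simp
next
  case False
  have "x * exp (- d * x) \<le> 1 / d"
  proof -
    have "d * x \<le> exp (d * x)" using exp_ge_add_one_self[of "d * x"] by linarith
    hence "d * x * exp (- d * x) \<le> exp (d * x) * exp (- d * x)" by (rule mult_right_mono) simp
    thus ?thesis using assms(1) by (simp add: field_simps exp_minus_inverse)
  qed
  have "norm (exp (h * of_real x) - exp (w * of_real x)) \<le> x * exp (- d * x) * norm (h - w)"
  proof (rule field_differentiable_bound[where S="{z. Re z \<le> - d}"])
    show "((\<lambda>h. exp (h * of_real x)) has_field_derivative of_real x * exp (z * of_real x))
        (at z within {z. Re z \<le> - d})" for z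
      by (auto intro!: derivative_eq_intros)
    show "norm (of_real x * exp (z * of_real x)) \<le> x * exp (- d * x)" if "z \<in> {z. Re z \<le> - d}" for z
    proof -
      have "Re z * x \<le> - d * x" using that \<open>x \<ge> 0\<close> by (intro mult_right_mono) auto
      thus ?thesis using \<open>x \<ge> 0\<close> by (simp add: norm_mult norm_exp_eq_Re mult_left_mono)
    qed
  qed (use assms convex_halfspace_Re_le in auto)
  also have "\<dots> \<le> 1 / d * norm (h - w)"
    using \<open>x * exp (- d * x) \<le> 1 / d\<close> by (rule mult_right_mono) simp
  finally show ?thesis using False by (simp add: norm_divide divide_le_eq)
qed

lemma laplace_transform_has_field_derivative:
  assumes P: "real_distribution P" and nonneg: "AE x in P. 0 \<le> x" and w: "Re w < 0"
  shows "(laplace_transform P has_field_derivative (CLINT x|P. of_real x * exp (w * of_real x))) (at w)"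
proof -
  interpret real_distribution P by fact
  define d where "d = - Re w / 2"
  have d: "d > 0" using w by (simp add: d_def)
  define S where "S = {h. Re h < - d}"
  have S: "open S" "w \<in> S"
    unfolding S_def using w by (simp_all add: open_halfspace_Re_lt) (simp add: d_def)
  have Re_S: "Re h \<le> - d" if "h \<in> S" for h
    using that by (simp add: S_def)
  define q where "q h x = (exp (h * of_real x) - exp (w * of_real x)) / (h - w)" for h x
  have quotient: "(laplace_transform P h - laplace_transform P w) / (h - w) = integral\<^sup>L P (q h)"
    if "h \<in> S" for h
    using integrable_exp_mult_nonneg[OF P nonneg] Re_S[OF that] d w unfolding laplace_transform_def q_def
    by (simp add: integral_divide_zero Bochner_Integration.integral_diff)
  have "((\<lambda>h. integral\<^sup>L P (q h)) \<longlongrightarrow> (CLINT x|P. of_real x * exp (w * of_real x))) (at w within S)"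
  proof (rule tendsto_integral_at_within[where w="\<lambda>_. 1 / d"])
    show "AE x in P. norm (q h x) \<le> 1 / d" if "h \<in> S" for h
      using nonneg
      by eventually_elim (use norm_exp_mult_diff_quotient_le[OF d _ Re_S[OF that] Re_S[OF S(2)]] in
          \<open>simp add: q_def\<close>)
    show "AE x in P. ((\<lambda>h. q h x) \<longlongrightarrow> of_real x * exp (w * of_real x)) (at w within S)"
    proof (intro AE_I2)
      fix x :: real
      have "((\<lambda>h. exp (h * of_real x)) has_field_derivative of_real x * exp (w * of_real x)) (at w within S)"
        by (auto intro!: derivative_eq_intros)
      thus "((\<lambda>h. q h x) \<longlongrightarrow> of_real x * exp (w * of_real x)) (at w within S)"
        unfolding has_field_derivative_iff q_def .
    qed
    show "q h \<in> borel_measurable P" for h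
      unfolding q_def by (simp add: measurable_cong_sets[OF events_eq_borel refl])
  qed (auto simp: measurable_cong_sets[OF events_eq_borel refl])
  hence "((\<lambda>h. (laplace_transform P h - laplace_transform P w) / (h - w))
      \<longlongrightarrow> (CLINT x|P. of_real x * exp (w * of_real x))) (at w within S)"
    by (rule Lim_transform_within[where d=1]) (use quotient in auto)
  thus ?thesis
    unfolding has_field_derivative_iff[symmetric] using at_within_open[OF S(2,1)] by simp
qed

lemma holomorphic_laplace_transform:
  assumes "real_distribution P" "AE x in P. 0 \<le> x"
  shows "laplace_transform P holomorphic_on {w. Re w < 0}"
  using laplace_transform_has_field_derivative[OF assms]
  by (subst holomorphic_on_open) (auto simp: open_halfspace_Re_lt)

lemma laplace_transform_tendsto_char:
  assumes P: "real_distribution P" and nonneg: "AE x in P. 0 \<le> x"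
  shows "(\<lambda>k. laplace_transform P (of_real (- inverse (Suc k)) + \<i> * of_real t)) \<longlonglongrightarrow> char P t"
proof -
  interpret real_distribution P by fact
  show ?thesis
    unfolding laplace_transform_def char_def
  proof (rule integral_dominated_convergence[where w="\<lambda>_. 1"])
    show "AE x in P. (\<lambda>k. exp ((of_real (- inverse (Suc k)) + \<i> * of_real t) * of_real x))
        \<longlonglongrightarrow> iexp (t * x)"
    proof (intro AE_I2)
      fix x :: real
      have "(\<lambda>k. exp ((of_real (- inverse (Suc k)) + \<i> * of_real t) * of_real x))
        \<longlonglongrightarrow> exp ((complex_of_real (- 0) + \<i> * of_real t) * of_real x)"
        by (intro tendsto_intros LIMSEQ_inverse_real_of_nat)
      thus "(\<lambda>k. exp ((of_real (- inverse (Suc k)) + \<i> * of_real t) * of_real x))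
        \<longlonglongrightarrow> iexp (t * x)"
        by (simp add: mult.assoc)
    qed
    show "AE x in P. norm (exp ((of_real (- inverse (Suc k)) + \<i> * of_real t) * of_real x)) \<le> 1" for k
      using nonneg by eventually_elim (simp add: norm_exp_eq_Re)
  qed (auto simp: measurable_cong_sets[OF events_eq_borel refl])
qed

lemma laplace_transform_unique:
  assumes P: "real_distribution P" and nonneg_P: "AE x in P. 0 \<le> x"
    and Q: "real_distribution Q" and nonneg_Q: "AE x in Q. 0 \<le> x"
    and U: "U \<subseteq> {w. Re w < 0}" "p islimpt U" "Re p < 0"
    and eq: "\<And>w. w \<in> U \<Longrightarrow> laplace_transform P w = laplace_transform Q w"
  shows "P = Q"
proof -
  have eq_half_plane: "laplace_transform P w = laplace_transform Q w" if "Re w < 0" for w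
  proof -
    have "laplace_transform P w - laplace_transform Q w = 0"
    proof (rule analytic_continuation[where f="\<lambda>w. laplace_transform P w - laplace_transform Q w"
          and S="{w. Re w < 0}" and U=U and \<xi>=p])
      show "(\<lambda>w. laplace_transform P w - laplace_transform Q w) holomorphic_on {w. Re w < 0}"
        by (intro holomorphic_intros holomorphic_laplace_transform P Q nonneg_P nonneg_Q)
      show "connected {w. Re w < 0}" by (intro convex_connected convex_halfspace_Re_lt)
    qed (use U eq that in \<open>auto simp: open_halfspace_Re_lt\<close>)
    thus ?thesis by simp
  qed
  have "char P t = char Q t" for t
  proof -
    have "(\<lambda>k. laplace_transform P (of_real (- inverse (Suc k)) + \<i> * of_real t)) \<longlonglongrightarrow> char Q t"
      using laplace_transform_tendsto_char[OF Q nonneg_Q, of t] by (simp add: eq_half_plane)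
    with laplace_transform_tendsto_char[OF P nonneg_P] show ?thesis by (rule LIMSEQ_unique)
  qed
  thus ?thesis using Levy_uniqueness[OF P Q] by blast
qed

section \<open>The Levy exponent\<close>

definition levy_integrand :: "real \<Rightarrow> real \<Rightarrow> complex" where
  "levy_integrand z x = iexp (z * x) - 1 - \<i> * of_real (z * x) * indicator {-1..1} x"

lemma borel_measurable_levy_integrand [measurable]: "levy_integrand z \<in> borel_measurable borel"
  unfolding levy_integrand_def by measurable

lemma levy_exponent_eq:
  "levy_exponent \<gamma> b \<nu> z = \<i> * of_real (z * \<gamma>) - of_real (b * z\<^sup>2 / 2) + (CLINT x|\<nu>. levy_integrand z x)"
  unfolding levy_exponent_def levy_integrand_def ..

lemma levy_exponent_0 [simp]: "levy_exponent \<gamma> b \<nu> 0 = 0"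
  unfolding levy_exponent_def by simp

lemma Re_levy_integrand: "Re (levy_integrand z x) = cos (z * x) - 1"
  by (simp add: levy_integrand_def indicator_def Re_exp)

lemma norm_levy_integrand_le: "norm (levy_integrand z x) \<le> (z\<^sup>2 + 2) * min 1 (x\<^sup>2)"
proof (cases "\<bar>x\<bar> \<le> 1")
  case True
  have "levy_integrand z x = iexp (z * x) - (\<Sum>k\<le>1. (\<i> * of_real (z * x)) ^ k / fact k)"
    using True by (simp add: levy_integrand_def indicator_def abs_le_iff)
  hence "norm (levy_integrand z x) \<le> \<bar>z * x\<bar> ^ 2 / 2"
    using iexp_approx1[of "z * x" 1] by (simp add: numeral_2_eq_2)
  also have "\<dots> \<le> (z\<^sup>2 + 2) * x\<^sup>2" by (simp add: power_mult_distrib field_simps)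
  moreover have "x\<^sup>2 \<le> 1" using True by (simp add: abs_square_le_1)
  ultimately show ?thesis by (simp add: min_def)
next
  case False
  have "norm (levy_integrand z x) = norm (iexp (z * x) - 1)"
    using False by (auto simp: levy_integrand_def indicator_def abs_le_iff)
  also have "\<dots> \<le> 2" using norm_triangle_ineq4[of "iexp (z * x)" 1] by simp
  also have "\<dots> \<le> z\<^sup>2 + 2" by simp
  finally show ?thesis using False abs_square_le_1[of x] by (simp add: min_def)
qed

lemma sets_levy_measure: "levy_measure \<nu> \<Longrightarrow> sets \<nu> = sets borel"
  by (simp add: levy_measure_def)

lemma integrable_min_1_square:
  assumes "levy_measure \<nu>"
  shows "integrable \<nu> (\<lambda>x. min 1 (x\<^sup>2))"
  unfolding integrable_iff_bounded
  using assms by (auto simp: levy_measure_def measurable_cong_sets[OF sets_levy_measure[OF assms] refl])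

lemma integrable_levy_integrand:
  assumes "levy_measure \<nu>"
  shows "integrable \<nu> (levy_integrand z)"
proof (rule Bochner_Integration.integrable_bound)
  show "integrable \<nu> (\<lambda>x. (z\<^sup>2 + 2) * min 1 (x\<^sup>2))"
    using integrable_min_1_square[OF assms] by simp
  show "levy_integrand z \<in> borel_measurable \<nu>"
    by (simp add: measurable_cong_sets[OF sets_levy_measure[OF assms] refl])
  show "AE x in \<nu>. norm (levy_integrand z x) \<le> norm ((z\<^sup>2 + 2) * min 1 (x\<^sup>2))"
    using norm_levy_integrand_le[of z] by (intro AE_I2) simp
qed

lemma continuous_levy_exponent:
  assumes "levy_measure \<nu>"
  shows "continuous_on UNIV (levy_exponent \<gamma> b \<nu>)"
proof -
  have "isCont (\<lambda>z. CLINT x|\<nu>. levy_integrand z x) z" for z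
  proof -
    define R where "R = (\<bar>z\<bar> + 1)\<^sup>2 + 2"
    have "((\<lambda>y. CLINT x|\<nu>. levy_integrand y x) \<longlongrightarrow> (CLINT x|\<nu>. levy_integrand z x)) (at z within ball z 1)"
    proof (rule tendsto_integral_at_within[where w="\<lambda>x. R * min 1 (x\<^sup>2)"])
      show "AE x in \<nu>. norm (levy_integrand y x) \<le> R * min 1 (x\<^sup>2)" if "y \<in> ball z 1" for y
      proof (intro AE_I2)
        fix x
        have "\<bar>y\<bar> \<le> \<bar>z\<bar> + 1" using that by (auto simp: dist_real_def)
        hence "y\<^sup>2 \<le> (\<bar>z\<bar> + 1)\<^sup>2" by (metis abs_ge_zero power2_abs power_mono)
        hence "(y\<^sup>2 + 2) * min 1 (x\<^sup>2) \<le> R * min 1 (x\<^sup>2)" unfolding R_def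
          by (intro mult_right_mono) auto
        thus "norm (levy_integrand y x) \<le> R * min 1 (x\<^sup>2)" using norm_levy_integrand_le[of y x] by linarith
      qed
      show "AE x in \<nu>. ((\<lambda>y. levy_integrand y x) \<longlongrightarrow> levy_integrand z x) (at z within ball z 1)"
        by (intro AE_I2) (auto simp: levy_integrand_def intro!: tendsto_intros)
      show "levy_integrand y \<in> borel_measurable \<nu>" for y
        by (simp add: measurable_cong_sets[OF sets_levy_measure[OF assms] refl])
      then show "levy_integrand z \<in> borel_measurable \<nu>" .
      show "integrable \<nu> (\<lambda>x. R * min 1 (x\<^sup>2))"
        using integrable_min_1_square[OF assms] by simp
    qed
    thus ?thesis using at_within_open[of z "ball z 1"] by (simp add: isCont_def)
  qed
  thus ?thesis
    unfolding levy_exponent_eq continuous_on_eq_continuous_at[OF open_UNIV]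
    by (auto intro!: continuous_intros)
qed

lemma Re_levy_exponent:
  assumes "levy_measure \<nu>"
  shows "Re (levy_exponent \<gamma> b \<nu> z) = - (b * z\<^sup>2 / 2) - (LINT x|\<nu>. 1 - cos (z * x))"
proof -
  have "Re (CLINT x|\<nu>. levy_integrand z x) = (LINT x|\<nu>. Re (levy_integrand z x))"
    using integrable_levy_integrand[OF assms] by simp
  also have "\<dots> = (LINT x|\<nu>. cos (z * x) - 1)"
    by (simp add: Re_levy_integrand)
  also have "\<dots> = (LINT x|\<nu>. - (1 - cos (z * x)))"
    by simp
  also have "\<dots> = - (LINT x|\<nu>. 1 - cos (z * x))"
    by (rule integral_minus)
  finally show ?thesis unfolding levy_exponent_eq by simp
qed

lemma Re_levy_exponent_nonpos:
  assumes "levy_measure \<nu>" "b \<ge> 0"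
  shows "Re (levy_exponent \<gamma> b \<nu> z) \<le> 0"
proof -
  have "0 \<le> (LINT x|\<nu>. 1 - cos (z * x))" by (intro integral_nonneg_AE AE_I2) simp
  moreover have "0 \<le> b * z\<^sup>2" using assms(2) by simp
  ultimately show ?thesis unfolding Re_levy_exponent[OF assms(1)] by linarith
qed

lemma eq_0_if_cos_div_Suc_eq_1:
  fixes x :: real
  assumes "\<And>k::nat. cos (x / real (Suc k)) = 1"
  shows "x = 0"
proof -
  obtain k :: nat where k: "\<bar>x\<bar> / (2 * pi) < real k" using reals_Archimedean2 by blast
  obtain n :: int where n: "x / real (Suc k) = of_int n * 2 * pi"
    using assms[of k] cos_one_2pi_int by blast
  have "\<bar>of_int n\<bar> * (2 * pi) = \<bar>x / real (Suc k)\<bar>"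
    unfolding n by (simp add: abs_mult)
  also have "\<dots> < 2 * pi"
    using k pi_gt_zero by (simp add: field_simps, linarith)
  finally have "n = 0" using pi_gt_zero by simp
  thus ?thesis using n by simp
qed

(* Re psi(y) = 0 forces b = 0 and nu to be carried by the lattice (2 pi / y) Z; for y = 1 / (k + 1),
   k = 0, 1, ..., these lattices meet only in 0, which nu does not charge. *)
lemma levy_exponent_eq_drift_if_Re_eq_0:
  assumes \<nu>: "levy_measure \<nu>" and b: "b \<ge> 0" and Re_0: "\<And>z. Re (levy_exponent \<gamma> b \<nu> z) = 0"
  shows "levy_exponent \<gamma> b \<nu> z = \<i> * of_real (z * \<gamma>)"
proof -
  have degenerate: "b = 0 \<and> (AE x in \<nu>. cos (y * x) = 1)" if "y \<noteq> 0" for y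
  proof -
    have "integrable \<nu> (\<lambda>x. - Re (levy_integrand y x))"
      using integrable_levy_integrand[OF \<nu>] by auto
    hence int: "integrable \<nu> (\<lambda>x. 1 - cos (y * x))"
      by (simp add: Re_levy_integrand)
    have "0 \<le> (LINT x|\<nu>. 1 - cos (y * x))" by (intro integral_nonneg_AE AE_I2) simp
    moreover have "0 \<le> b * y\<^sup>2 / 2" using b by simp
    moreover have "b * y\<^sup>2 / 2 + (LINT x|\<nu>. 1 - cos (y * x)) = 0"
      using Re_0[of y] unfolding Re_levy_exponent[OF \<nu>] by simp
    ultimately have "b * y\<^sup>2 = 0" "(LINT x|\<nu>. 1 - cos (y * x)) = 0" by linarith+
    hence "b = 0" "AE x in \<nu>. 1 - cos (y * x) = 0"
      using that integral_nonneg_eq_0_iff_AE[OF int] by auto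
    thus ?thesis by auto
  qed
  have "AE x in \<nu>. \<forall>k::nat. cos (x / real (Suc k)) = 1"
    unfolding AE_all_countable
  proof
    fix k :: nat
    show "AE x in \<nu>. cos (x / real (Suc k)) = 1"
      using degenerate[of "1 / real (Suc k)"] by simp
  qed
  moreover have "AE x in \<nu>. x \<noteq> 0"
    using \<nu> by (intro AE_I'[of "{0}"]) (auto simp: levy_measure_def null_sets_def)
  ultimately have "AE x in \<nu>. False"
  proof eventually_elim
    case (elim x)
    thus False using eq_0_if_cos_div_Suc_eq_1[of x] by blast
  qed
  hence "(CLINT x|\<nu>. levy_integrand z x) = 0"
    by (intro integral_eq_zero_AE) (auto elim: AE_mp)
  thus ?thesis unfolding levy_exponent_eq using degenerate[of 1] by simp
qed

lemma islimpt_range_levy_exponent: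
  assumes \<nu>: "levy_measure \<nu>" and z: "Re (levy_exponent \<gamma> b \<nu> z) < 0"
  shows "levy_exponent \<gamma> b \<nu> z islimpt (range (levy_exponent \<gamma> b \<nu>) \<inter> {w. Re w < 0})"
proof -
  define \<psi> where "\<psi> = levy_exponent \<gamma> b \<nu>"
  have "\<psi> z islimpt range \<psi>"
  proof (rule connected_imp_perfect)
    show "connected (range \<psi>)"
      using continuous_levy_exponent[OF \<nu>] by (intro connected_continuous_image connected_UNIV) (simp add: \<psi>_def)
    show "range \<psi> \<noteq> {w}" for w
    proof
      assume "range \<psi> = {w}"
      hence "\<psi> z = w" "\<psi> 0 = w" by auto
      thus False using z by (simp add: \<psi>_def)
    qed
  qed auto
  hence "\<psi> z islimpt (range \<psi> \<inter> {w. Re w < 0})"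
    by (rule islimpt_Int_eventually) (intro eventually_at_in_open' open_halfspace_Re_lt, use z in \<open>simp add: \<psi>_def\<close>)
  thus ?thesis by (simp add: \<psi>_def)
qed

lemma id_law_of_triplet_drift_nonzero:
  assumes \<mu>: "id_law_of_triplet \<mu> \<gamma> b \<nu>" and \<mu>_nondegenerate: "\<mu> \<noteq> return borel 0"
    and drift: "\<And>z. levy_exponent \<gamma> b \<nu> z = \<i> * of_real (z * \<gamma>)"
  shows "\<gamma> \<noteq> 0"
proof
  assume "\<gamma> = 0"
  hence "char \<mu> t = char (return borel 0) t" for t
    using \<mu> drift[of t] by (simp add: id_law_of_triplet_def char_def integral_return)
  moreover have "real_distribution \<mu>"
    using \<mu> by (simp add: id_law_of_triplet_def real_distribution_def real_distribution_axioms_def)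
  moreover have "real_distribution (return borel (0::real))"
    by (simp add: real_distribution_def real_distribution_axioms_def prob_space_return)
  ultimately have "\<mu> = return borel 0"
    using Levy_uniqueness by blast
  with \<mu>_nondegenerate show False ..
qed

lemma laplace_transform_levy_exponent_unique:
  assumes P: "real_distribution P" and nonneg_P: "AE x in P. 0 \<le> x"
    and Q: "real_distribution Q" and nonneg_Q: "AE x in Q. 0 \<le> x"
    and \<nu>: "levy_measure \<nu>" and b: "b \<ge> 0"
    and \<mu>: "id_law_of_triplet \<mu> \<gamma> b \<nu>" and \<mu>_nondegenerate: "\<mu> \<noteq> return borel 0"
    and eq: "\<And>z. laplace_transform P (levy_exponent \<gamma> b \<nu> z) = laplace_transform Q (levy_exponent \<gamma> b \<nu> z)"
  shows "P = Q"
proof (cases "\<exists>z. Re (levy_exponent \<gamma> b \<nu> z) < 0")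
  case True
  then obtain z where z: "Re (levy_exponent \<gamma> b \<nu> z) < 0" ..
  show ?thesis
    by (rule laplace_transform_unique[OF P nonneg_P Q nonneg_Q _ islimpt_range_levy_exponent[OF \<nu> z] z])
      (auto simp: eq)
next
  case False
  hence "Re (levy_exponent \<gamma> b \<nu> z) = 0" for z
    using Re_levy_exponent_nonpos[OF \<nu> b, of \<gamma> z] by (meson not_le order.antisym)
  hence drift: "levy_exponent \<gamma> b \<nu> z = \<i> * of_real (z * \<gamma>)" for z
    by (rule levy_exponent_eq_drift_if_Re_eq_0[OF \<nu> b])
  have "\<gamma> \<noteq> 0" using id_law_of_triplet_drift_nonzero[OF \<mu> \<mu>_nondegenerate drift] .
  hence "laplace_transform R (levy_exponent \<gamma> b \<nu> (t / \<gamma>)) = char R t" for R t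
    unfolding laplace_transform_def char_def drift by (simp add: mult.assoc)
  hence "char P t = char Q t" for t
    using eq[of "t / \<gamma>"] by metis
  hence "char P = char Q" ..
  thus ?thesis by (rule Levy_uniqueness[OF P Q])
qed

section \<open>Finite-dimensional laws of non-negative Levy bases\<close>

lemma (in prob_space) distr_eq_distr_PiM_if_AE_eq:
  assumes I: "I \<noteq> {}" and Y: "\<And>i. i \<in> I \<Longrightarrow> random_variable (N i) (Y i)"
    and indep: "indep_vars N Y I"
    and \<Phi>: "\<Phi> \<in> measurable (PiM I N) N'" and X: "X \<in> measurable M N'"
    and X_eq: "AE \<omega> in M. X \<omega> = \<Phi> (\<lambda>i\<in>I. Y i \<omega>)"
  shows "distr M N' X = distr (PiM I (\<lambda>i. distr M (N i) (Y i))) N' \<Phi>"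
proof -
  have Y_joint: "(\<lambda>\<omega>. \<lambda>i\<in>I. Y i \<omega>) \<in> measurable M (PiM I N)"
    using Y by (rule measurable_restrict)
  have "distr M N' X = distr M N' (\<lambda>\<omega>. \<Phi> (\<lambda>i\<in>I. Y i \<omega>))"
    using measurable_comp[OF Y_joint \<Phi>] by (intro distr_cong_AE[OF refl refl X_eq X]) (simp add: comp_def)
  also have "\<dots> = distr (distr M (PiM I N) (\<lambda>\<omega>. \<lambda>i\<in>I. Y i \<omega>)) N' \<Phi>"
    by (simp add: distr_distr[OF \<Phi> Y_joint] comp_def)
  also have "distr M (PiM I N) (\<lambda>\<omega>. \<lambda>i\<in>I. Y i \<omega>) = PiM I (\<lambda>i. distr M (N i) (Y i))"
    using indep indep_vars_iff_distr_eq_PiM'[OF I Y] by simp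
  finally show ?thesis .
qed

(* The cell with index k > 0 consists of the points lying in exactly those A i, i < n, with
   i \<in> set_decode k; the cells partition \<Union>i<n. A i. *)
definition cell :: "nat \<Rightarrow> (nat \<Rightarrow> 'a set) \<Rightarrow> nat \<Rightarrow> 'a set" where
  "cell n A k = {x. 0 < k \<and> set_encode {i. i < n \<and> x \<in> A i} = k}"

lemma mem_cell_iff: "x \<in> cell n A k \<longleftrightarrow> 0 < k \<and> {i. i < n \<and> x \<in> A i} = set_decode k"
proof -
  have "finite {i. i < n \<and> x \<in> A i}" by simp
  hence "set_encode {i. i < n \<and> x \<in> A i} = k \<longleftrightarrow> {i. i < n \<and> x \<in> A i} = set_decode k"
    by (metis set_decode_inverse set_encode_inverse)
  thus ?thesis unfolding cell_def by blast
qed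

lemma disjoint_family_cell: "disjoint_family (cell n A)"
  unfolding disjoint_family_on_def cell_def by auto

lemma cell_subset_Union: "cell n A k \<subseteq> (\<Union>i<n. A i)"
proof
  fix x assume x: "x \<in> cell n A k"
  hence "0 < set_encode {i. i < n \<and> x \<in> A i}" by (simp add: cell_def)
  hence "{i. i < n \<and> x \<in> A i} \<noteq> {}" by (intro notI) simp
  thus "x \<in> (\<Union>i<n. A i)" by blast
qed

lemma cell_eq:
  "cell n A k = (if 0 < k \<and> set_decode k \<subseteq> {..<n}
     then (\<Inter>i\<in>set_decode k. A i) - (\<Union>i\<in>{..<n} - set_decode k. A i) else {})"
proof (intro set_eqI)
  fix x
  have "{i. i < n \<and> x \<in> A i} = set_decode k \<longleftrightarrow>
      set_decode k \<subseteq> {..<n} \<and> (\<forall>i\<in>set_decode k. x \<in> A i) \<and> (\<forall>i\<in>{..<n} - set_decode k. x \<notin> A i)"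
    unfolding set_eq_iff by auto
  thus "x \<in> cell n A k \<longleftrightarrow> x \<in> (if 0 < k \<and> set_decode k \<subseteq> {..<n}
     then (\<Inter>i\<in>set_decode k. A i) - (\<Union>i\<in>{..<n} - set_decode k. A i) else {})"
    unfolding mem_cell_iff by auto
qed

lemma sets_cell:
  assumes "\<And>i. i < n \<Longrightarrow> A i \<in> sets M"
  shows "cell n A k \<in> sets M"
proof (cases "0 < k \<and> set_decode k \<subseteq> {..<n}")
  case True
  hence "set_decode k \<noteq> {}" by (metis less_irrefl set_decode_inverse set_encode_empty)
  thus ?thesis
    using True assms unfolding cell_eq by (auto intro!: sets.Diff sets.finite_INT sets.finite_UN)
qed (auto simp: cell_eq)

lemma cell_bborel:
  assumes "\<forall>i<n. A i \<in> bborel"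
  shows "cell n A k \<in> bborel"
proof -
  have "bounded (\<Union>i<n. A i)" using assms by (auto simp: bborel_def)
  thus ?thesis
    using assms sets_cell[of n A borel k] bounded_subset[OF _ cell_subset_Union]
    unfolding bborel_def by blast
qed

lemma set_encode_less_power2:
  assumes "J \<subseteq> {..<n}"
  shows "set_encode J < 2 ^ n"
proof -
  have "set_encode J \<le> set_encode {..<n}"
    using assms unfolding set_encode_def by (intro sum_mono2) auto
  also have "set_encode {..<n} < 2 ^ n"
    by (induction n) (simp_all add: lessThan_Suc)
  finally show ?thesis .
qed

lemma Union_cells:
  assumes "i < n"
  shows "(\<Union>k\<in>{k. k < 2 ^ n \<and> i \<in> set_decode k}. cell n A k) = A i"
proof (intro equalityI subsetI)
  fix x assume "x \<in> (\<Union>k\<in>{k. k < 2 ^ n \<and> i \<in> set_decode k}. cell n A k)"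
  thus "x \<in> A i" using assms by (auto simp: mem_cell_iff)
next
  fix x assume x: "x \<in> A i"
  define k where "k = set_encode {j. j < n \<and> x \<in> A j}"
  have decode_k: "set_decode k = {j. j < n \<and> x \<in> A j}" by (simp add: k_def)
  have "i \<in> set_decode k" using x assms by (simp add: decode_k)
  moreover from this have "0 < k" by (intro Nat.gr0I) simp
  moreover have "k < 2 ^ n" unfolding k_def by (intro set_encode_less_power2) auto
  ultimately show "x \<in> (\<Union>k\<in>{k. k < 2 ^ n \<and> i \<in> set_decode k}. cell n A k)"
    by (auto simp: mem_cell_iff decode_k)
qed

lemma levy_basis_measurable: "levy_basis M X \<Longrightarrow> A \<in> bborel \<Longrightarrow> (\<lambda>\<omega>. X \<omega> A) \<in> borel_measurable M"
  unfolding levy_basis_def by blast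

definition sums_additive :: "((real^'n) set \<Rightarrow> real) \<Rightarrow> bool" where
  "sums_additive f \<longleftrightarrow> (\<forall>A :: nat \<Rightarrow> (real^'n) set. range A \<subseteq> bborel \<longrightarrow> disjoint_family A \<longrightarrow>
     bounded (\<Union>n. A n) \<longrightarrow> (\<lambda>n. f (A n)) sums f (\<Union>n. A n))"

lemma nonneg_levy_basis_AE_sums_additive:
  "nonneg_levy_basis M T \<Longrightarrow> AE \<omega> in M. sums_additive (T \<omega>)"
  unfolding nonneg_levy_basis_def by (erule conjE, erule eventually_mono) (simp add: sums_additive_def)

lemma sums_additive_empty:
  assumes "sums_additive f"
  shows "f {} = 0"
proof -
  have "(\<lambda>n::nat. f {}) sums f {}"
    using assms[unfolded sums_additive_def, rule_format, of "\<lambda>_. {}"]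
    by (simp add: bborel_def disjoint_family_on_def)
  thus ?thesis by (simp add: sums_iff summable_const_iff)
qed

lemma sums_additive_finite_UN:
  fixes B :: "nat \<Rightarrow> (real^'n) set"
  assumes f: "sums_additive f" and I: "finite I" and B: "B ` I \<subseteq> bborel" and disj: "disjoint_family_on B I"
  shows "f (\<Union>i\<in>I. B i) = (\<Sum>i\<in>I. f (B i))"
proof -
  define C where "C i = (if i \<in> I then B i else {})" for i
  have C_UN: "(\<Union>i. C i) = (\<Union>i\<in>I. B i)" by (auto simp: C_def split: if_splits)
  have "range C \<subseteq> bborel" using B by (auto simp: C_def bborel_def)
  moreover have "disjoint_family C" using disj by (auto simp: C_def disjoint_family_on_def)
  moreover have "bounded (\<Union>i. C i)" using B I unfolding C_UN by (auto simp: bborel_def)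
  ultimately have "(\<lambda>i. f (C i)) sums f (\<Union>i\<in>I. B i)"
    using f[unfolded sums_additive_def, rule_format, of C] unfolding C_UN by blast
  moreover have "(\<lambda>i. f (C i)) sums (\<Sum>i\<in>I. f (C i))"
    using sums_additive_empty[OF f] by (intro sums_finite[OF I]) (simp add: C_def)
  moreover have "(\<Sum>i\<in>I. f (C i)) = (\<Sum>i\<in>I. f (B i))"
    by (simp add: C_def)
  ultimately show ?thesis using sums_unique2 by metis
qed

lemma sums_additive_sum_cells:
  assumes "sums_additive f" "\<forall>i<n. A i \<in> bborel" "i < n"
  shows "f (A i) = (\<Sum>k | k < 2 ^ n \<and> i \<in> set_decode k. f (cell n A k))"
proof -
  have "f (\<Union>k\<in>{k. k < 2 ^ n \<and> i \<in> set_decode k}. cell n A k)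
      = (\<Sum>k | k < 2 ^ n \<and> i \<in> set_decode k. f (cell n A k))"
    using cell_bborel[OF assms(2)] disjoint_family_on_mono[OF subset_UNIV disjoint_family_cell]
    by (intro sums_additive_finite_UN[OF assms(1)]) auto
  thus ?thesis unfolding Union_cells[OF assms(3)] .
qed

lemma distr_nonneg_levy_basis_eq_distr_cells:
  assumes X: "nonneg_levy_basis M X" and A: "\<forall>i<n. A i \<in> bborel"
  shows "distr M (PiM {..<n} (\<lambda>_. borel)) (\<lambda>\<omega>. \<lambda>i\<in>{..<n}. X \<omega> (A i))
    = distr (PiM {..<2 ^ n} (\<lambda>k. distr M borel (\<lambda>\<omega>. X \<omega> (cell n A k)))) (PiM {..<n} (\<lambda>_. borel))
        (\<lambda>f. \<lambda>i\<in>{..<n}. \<Sum>k | k < 2 ^ n \<and> i \<in> set_decode k. f k)"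
proof (rule prob_space.distr_eq_distr_PiM_if_AE_eq)
  have X_basis: "levy_basis M X" using X by (simp add: nonneg_levy_basis_def)
  thus "prob_space M" by (simp add: levy_basis_def)
  show "(\<lambda>\<omega>. X \<omega> (cell n A k)) \<in> borel_measurable M" for k
    using X_basis cell_bborel[OF A] by (rule levy_basis_measurable)
  have "independently_scattered M X" using X_basis by (simp add: levy_basis_def)
  thus "prob_space.indep_vars M (\<lambda>_. borel) (\<lambda>k \<omega>. X \<omega> (cell n A k)) {..<2 ^ n}"
    unfolding independently_scattered_def
    using cell_bborel[OF A] disjoint_family_on_mono[OF subset_UNIV disjoint_family_cell] by blast
  show "(\<lambda>f. \<lambda>i\<in>{..<n}. \<Sum>k | k < 2 ^ n \<and> i \<in> set_decode k. f k)
      \<in> measurable (PiM {..<2 ^ n} (\<lambda>_. borel)) (PiM {..<n} (\<lambda>_. borel :: real measure))"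
    by measurable
  show "(\<lambda>\<omega>. \<lambda>i\<in>{..<n}. X \<omega> (A i)) \<in> measurable M (PiM {..<n} (\<lambda>_. borel))"
    using X_basis A by (intro measurable_restrict levy_basis_measurable) auto
  show "AE \<omega> in M. (\<lambda>i\<in>{..<n}. X \<omega> (A i))
      = (\<lambda>f. \<lambda>i\<in>{..<n}. \<Sum>k | k < 2 ^ n \<and> i \<in> set_decode k. f k) (\<lambda>k\<in>{..<2 ^ n}. X \<omega> (cell n A k))"
    using nonneg_levy_basis_AE_sums_additive[OF X]
  proof eventually_elim
    case (elim \<omega>)
    show ?case
      by (rule ext) (simp add: sums_additive_sum_cells[OF elim A])
  qed
qed (metis empty_iff lessThan_iff zero_less_numeral zero_less_power)

lemma fdd_eq_if_marginals_eq:
  fixes T T' :: "'w \<Rightarrow> (real^'n) set \<Rightarrow> real"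
  assumes T: "nonneg_levy_basis M T" and T': "nonneg_levy_basis M T'"
    and marginals: "\<And>A. A \<in> bborel \<Longrightarrow> distr M borel (\<lambda>\<omega>. T \<omega> A) = distr M borel (\<lambda>\<omega>. T' \<omega> A)"
  shows "fdd_eq M T T'"
  unfolding fdd_eq_def
proof (intro allI impI)
  fix n and A :: "nat \<Rightarrow> (real^'n) set"
  assume A: "\<forall>i<n. A i \<in> bborel"
  show "distr M (PiM {..<n} (\<lambda>_. borel)) (\<lambda>\<omega>. \<lambda>i\<in>{..<n}. T \<omega> (A i))
      = distr M (PiM {..<n} (\<lambda>_. borel)) (\<lambda>\<omega>. \<lambda>i\<in>{..<n}. T' \<omega> (A i))"
    unfolding distr_nonneg_levy_basis_eq_distr_cells[OF T A] distr_nonneg_levy_basis_eq_distr_cells[OF T' A]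
    using marginals[OF cell_bborel[OF A]] by simp
qed

section \<open>Subordination\<close>

lemma real_distribution_levy_basis:
  assumes "levy_basis M X" "A \<in> bborel"
  shows "real_distribution (distr M borel (\<lambda>\<omega>. X \<omega> A))"
  using assms levy_basis_measurable[OF assms] prob_space.prob_space_distr
  by (auto simp: levy_basis_def real_distribution_def real_distribution_axioms_def)

lemma nonneg_levy_basis_AE_nonneg:
  assumes T: "nonneg_levy_basis M T" and A: "A \<in> bborel"
  shows "AE x in distr M borel (\<lambda>\<omega>. T \<omega> A). 0 \<le> x"
proof -
  have "AE \<omega> in M. 0 \<le> T \<omega> A"
    using T[unfolded nonneg_levy_basis_def, THEN conjunct2] by (rule eventually_mono) (use A in blast)
  moreover have "(\<lambda>\<omega>. T \<omega> A) \<in> borel_measurable M"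
    using T A by (simp add: nonneg_levy_basis_def levy_basis_measurable)
  ultimately show ?thesis by (simp add: AE_distr_iff)
qed

lemma fdd_eq_imp_distr_eq:
  assumes "fdd_eq M X Y" "A \<in> bborel"
    and X: "(\<lambda>\<omega>. X \<omega> A) \<in> borel_measurable M" and Y: "(\<lambda>\<omega>. Y \<omega> A) \<in> borel_measurable M"
  shows "distr M borel (\<lambda>\<omega>. X \<omega> A) = distr M borel (\<lambda>\<omega>. Y \<omega> A)"
proof -
  have "distr M (PiM {..<1} (\<lambda>_. borel)) (\<lambda>\<omega>. \<lambda>i\<in>{..<1::nat}. X \<omega> A)
      = distr M (PiM {..<1} (\<lambda>_. borel)) (\<lambda>\<omega>. \<lambda>i\<in>{..<1::nat}. Y \<omega> A)"
    using assms(1)[unfolded fdd_eq_def, rule_format, of 1 "\<lambda>_. A"] assms(2) by simp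
  hence "distr (distr M (PiM {..<1} (\<lambda>_. borel)) (\<lambda>\<omega>. \<lambda>i\<in>{..<1::nat}. X \<omega> A)) borel (\<lambda>f. f 0)
      = distr (distr M (PiM {..<1} (\<lambda>_. borel)) (\<lambda>\<omega>. \<lambda>i\<in>{..<1::nat}. Y \<omega> A)) borel (\<lambda>f. f 0)"
    by simp
  thus ?thesis
    using X Y by (simp add: distr_distr comp_def measurable_restrict)
qed

lemma laplace_transform_subordinated:
  assumes sub: "subordinated M \<gamma> b \<nu> T LS" and T: "levy_basis M T" and A: "A \<in> bborel"
  shows "laplace_transform (distr M borel (\<lambda>\<omega>. T \<omega> A)) (levy_exponent \<gamma> b \<nu> z)
    = char (distr M borel (\<lambda>\<omega>. LS \<omega> A)) z"
proof -
  have LS: "levy_basis M LS" using sub by (simp add: subordinated_def)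
  have "space M \<in> field_sigma M T" unfolding field_sigma_def by (rule sigma_sets_top)
  hence "(CLINT \<omega>|M. indicator (space M) \<omega> * iexp (z * LS \<omega> A))
      = (CLINT \<omega>|M. indicator (space M) \<omega> * exp (of_real (T \<omega> A) * levy_exponent \<gamma> b \<nu> z))"
    using sub[unfolded subordinated_def, THEN conjunct2, THEN conjunct2, rule_format,
        of 1 "\<lambda>_. A" "space M" "\<lambda>_. z"] A
    by (simp add: disjoint_family_on_def)
  moreover have "(CLINT \<omega>|M. indicator (space M) \<omega> * iexp (z * LS \<omega> A)) = (CLINT \<omega>|M. iexp (z * LS \<omega> A))"
    by (intro Bochner_Integration.integral_cong) auto
  moreover have "(CLINT \<omega>|M. indicator (space M) \<omega> * exp (of_real (T \<omega> A) * levy_exponent \<gamma> b \<nu> z))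
      = (CLINT \<omega>|M. exp (levy_exponent \<gamma> b \<nu> z * of_real (T \<omega> A)))"
    by (intro Bochner_Integration.integral_cong) (auto simp: mult.commute)
  ultimately show ?thesis
    unfolding laplace_transform_def char_def
    using levy_basis_measurable[OF T A] levy_basis_measurable[OF LS A] by (simp add: integral_distr)
qed

theorem theorem5p1:
  fixes M :: "'w measure"
    and L T T' LS LS' :: "'w \<Rightarrow> (real^'n) set \<Rightarrow> real"
    and \<gamma> b :: real and \<nu> \<mu> :: "real measure"
  assumes "prob_space M"
    and "homogeneous_levy_basis M L \<gamma> b \<nu>"
    and "id_law_of_triplet \<mu> \<gamma> b \<nu>"
    and "\<mu> \<noteq> return borel 0"
    and "nonneg_levy_basis M T" and "continuous_control_measure M T"
    and "nonneg_levy_basis M T'" and "continuous_control_measure M T'"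
    and "indep_fields M T L" and "indep_fields M T' L"
    and "subordinated M \<gamma> b \<nu> T LS" and "subordinated M \<gamma> b \<nu> T' LS'"
    and "fdd_eq M LS LS'"
  shows "fdd_eq M T T'"
proof (rule fdd_eq_if_marginals_eq[OF assms(5,7)])
  fix A :: "(real^'n) set" assume A: "A \<in> bborel"
  have T: "levy_basis M T" and T': "levy_basis M T'"
    using assms(5,7) by (simp_all add: nonneg_levy_basis_def)
  have LS: "levy_basis M LS" and LS': "levy_basis M LS'"
    using assms(11,12) by (simp_all add: subordinated_def)
  have \<nu>: "levy_measure \<nu>" and b: "b \<ge> 0"
    using assms(2) by (simp_all add: homogeneous_levy_basis_def)
  show "distr M borel (\<lambda>\<omega>. T \<omega> A) = distr M borel (\<lambda>\<omega>. T' \<omega> A)"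
  proof (rule laplace_transform_levy_exponent_unique[OF _ _ _ _ \<nu> b assms(3,4)])
    fix z
    have "distr M borel (\<lambda>\<omega>. LS \<omega> A) = distr M borel (\<lambda>\<omega>. LS' \<omega> A)"
      using assms(13) A levy_basis_measurable[OF LS A] levy_basis_measurable[OF LS' A]
      by (rule fdd_eq_imp_distr_eq)
    thus "laplace_transform (distr M borel (\<lambda>\<omega>. T \<omega> A)) (levy_exponent \<gamma> b \<nu> z)
        = laplace_transform (distr M borel (\<lambda>\<omega>. T' \<omega> A)) (levy_exponent \<gamma> b \<nu> z)"
      using laplace_transform_subordinated[OF assms(11) T A] laplace_transform_subordinated[OF assms(12) T' A]
      by simp
  qed (use A assms(5,7) T T' in \<open>simp_all add: real_distribution_levy_basis nonneg_levy_basis_AE_nonneg\<close>)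
qed

end
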